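(* Let $A,B$ be rings and $M$ a $B$-$A$ bimodule. If either (1) $M$ is a separable bimodule, or (2) the evaluation map $\mathrm{ev}_M:M\otimes_A{}^*M\to B$ is injective, then $M$ is a formally smooth bimodule.
   Context: Left $B$-linear maps are written on the right of arguments; ${}^*M:={}_B\mathrm{Hom}(M,B)$ is an $A$-$B$ bimodule via $(m)(afb)=((ma)f)b$; $\mathrm{ev}_M(m\otimes_Af)=(m)f$ is a $B$-bimodule map. $M$ is separable if $\mathrm{ev}_M$ is a split epimorphism of $B$-bimodules. $\mathcal{E}_{M,B}$ is the class of $B$-bimodule maps $f:Y\to Y'$ such that ${}_B\mathrm{Hom}(M,f):{}_B\mathrm{Hom}(M,Y)\to{}_B\mathrm{Hom}(M,Y')$ has a right inverse as an $A$-$B$ bimodule map. A $B$-bimodule $P$ is $\mathcal{E}_{M,B}$-projective if for every $f:Y\to Y'$ in $\mathcal{E}_{M,B}$ every $B$-bimodule map $P\to Y'$ factors through $f$. $M$ is a formally smooth bimodule if $\mathrm{Ker}(\mathrm{ev}_M)$ is an $\mathcal{E}_{M,B}$-projective $B$-bimodule. *)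

theory Defs
  imports Main "HOL-Library.Function_Algebras"
begin

section \<open>Bimodules (carrier = whole type)\<close>

definition bimodule :: "('r::ring_1 \<Rightarrow> 'x::ab_group_add \<Rightarrow> 'x) \<Rightarrow> ('x \<Rightarrow> 's::ring_1 \<Rightarrow> 'x) \<Rightarrow> bool" where
  "bimodule l r \<longleftrightarrow>
     (\<forall>a x y. l a (x + y) = l a x + l a y) \<and>
     (\<forall>a b x. l (a + b) x = l a x + l b x) \<and>
     (\<forall>a b x. l (a * b) x = l a (l b x)) \<and>
     (\<forall>x. l 1 x = x) \<and>
     (\<forall>s x y. r (x + y) s = r x s + r y s) \<and>
     (\<forall>s t x. r x (s + t) = r x s + r x t) \<and>
     (\<forall>s t x. r x (s * t) = r (r x s) t) \<and>
     (\<forall>x. r x 1 = x) \<and>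
     (\<forall>a x s. l a (r x s) = r (l a x) s)"

definition bihom ::
  "'x set \<Rightarrow> 'y set \<Rightarrow> ('x \<Rightarrow> 'x \<Rightarrow> 'x) \<Rightarrow> ('y \<Rightarrow> 'y \<Rightarrow> 'y) \<Rightarrow>
   ('r \<Rightarrow> 'x \<Rightarrow> 'x) \<Rightarrow> ('r \<Rightarrow> 'y \<Rightarrow> 'y) \<Rightarrow> ('x \<Rightarrow> 's \<Rightarrow> 'x) \<Rightarrow> ('y \<Rightarrow> 's \<Rightarrow> 'y) \<Rightarrow>
   ('x \<Rightarrow> 'y) \<Rightarrow> bool" where
  "bihom S T addS addT lS lT rS rT \<phi> \<longleftrightarrow>
     (\<forall>x\<in>S. \<phi> x \<in> T) \<and>
     (\<forall>x\<in>S. \<forall>y\<in>S. \<phi> (addS x y) = addT (\<phi> x) (\<phi> y)) \<and>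
     (\<forall>a. \<forall>x\<in>S. \<phi> (lS a x) = lT a (\<phi> x)) \<and>
     (\<forall>s. \<forall>x\<in>S. \<phi> (rS x s) = rT (\<phi> x) s)"

text \<open>{}_B Hom(M,Y): additive maps h with h(b m) = b h(m). (Written as functions; the
  paper writes them on the right.)\<close>
definition lhom :: "('b \<Rightarrow> 'm::ab_group_add \<Rightarrow> 'm) \<Rightarrow> ('b \<Rightarrow> 'y::ab_group_add \<Rightarrow> 'y) \<Rightarrow> ('m \<Rightarrow> 'y) set" where
  "lhom lM lY = {h. (\<forall>x y. h (x + y) = h x + h y) \<and> (\<forall>b x. h (lM b x) = lY b (h x))}"

definition dual :: "('b::ring_1 \<Rightarrow> 'm::ab_group_add \<Rightarrow> 'm) \<Rightarrow> ('m \<Rightarrow> 'b) set" where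
  "dual lM = lhom lM (*)"

text \<open>A-B bimodule structure on {}_B Hom(M,Y): (m)(a h b) = ((m a) h) b.\<close>
definition hom_lact :: "('m \<Rightarrow> 'a \<Rightarrow> 'm) \<Rightarrow> 'a \<Rightarrow> ('m \<Rightarrow> 'y) \<Rightarrow> ('m \<Rightarrow> 'y)" where
  "hom_lact rM a h = (\<lambda>m. h (rM m a))"

definition hom_ract :: "('y \<Rightarrow> 'b \<Rightarrow> 'y) \<Rightarrow> ('m \<Rightarrow> 'y) \<Rightarrow> 'b \<Rightarrow> ('m \<Rightarrow> 'y)" where
  "hom_ract rY h b = (\<lambda>m. rY (h m) b)"

section \<open>The tensor product M \<otimes>_A {}^*M, constructed as a quotient of a free abelian group\<close>

text \<open>Free abelian group on pairs (m,f) with f in the dual: finitely supported integer functions.\<close>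
definition freeT :: "('b::ring_1 \<Rightarrow> 'm::ab_group_add \<Rightarrow> 'm) \<Rightarrow> ('m \<times> ('m \<Rightarrow> 'b) \<Rightarrow> int) set" where
  "freeT lM = {u. finite {x. u x \<noteq> 0} \<and> (\<forall>x. u x \<noteq> 0 \<longrightarrow> snd x \<in> dual lM)}"

definition delta :: "'x \<Rightarrow> ('x \<Rightarrow> int)" where
  "delta x = (\<lambda>y. if y = x then 1 else 0)"

text \<open>Generators of the relations: biadditivity and A-balancedness, (m a) \<otimes> f = m \<otimes> (a f).\<close>
definition tens_rels ::
  "('b::ring_1 \<Rightarrow> 'm::ab_group_add \<Rightarrow> 'm) \<Rightarrow> ('m \<Rightarrow> 'a \<Rightarrow> 'm) \<Rightarrow> ('m \<times> ('m \<Rightarrow> 'b) \<Rightarrow> int) set" where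
  "tens_rels lM rM =
     {delta (m + m', f) - delta (m, f) - delta (m', f) | m m' f. f \<in> dual lM} \<union>
     {delta (m, f + g) - delta (m, f) - delta (m, g) | m f g. f \<in> dual lM \<and> g \<in> dual lM} \<union>
     {delta (rM m a, f) - delta (m, hom_lact rM a f) | m a f. f \<in> dual lM}"

inductive_set gen_subgroup :: "('x::ab_group_add) set \<Rightarrow> 'x set" for G where
  zero: "0 \<in> gen_subgroup G"
| gen: "g \<in> G \<Longrightarrow> g \<in> gen_subgroup G"
| add: "u \<in> gen_subgroup G \<Longrightarrow> v \<in> gen_subgroup G \<Longrightarrow> u + v \<in> gen_subgroup G"
| neg: "u \<in> gen_subgroup G \<Longrightarrow> - u \<in> gen_subgroup G"

definition tcls :: "('b::ring_1 \<Rightarrow> 'm::ab_group_add \<Rightarrow> 'm) \<Rightarrow> ('m \<Rightarrow> 'a \<Rightarrow> 'm) \<Rightarrow>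
    ('m \<times> ('m \<Rightarrow> 'b) \<Rightarrow> int) \<Rightarrow> ('m \<times> ('m \<Rightarrow> 'b) \<Rightarrow> int) set" where
  "tcls lM rM u = {v \<in> freeT lM. u - v \<in> gen_subgroup (tens_rels lM rM)}"

text \<open>Carrier of M \<otimes>_A {}^*M: the equivalence classes.\<close>
definition tensor :: "('b::ring_1 \<Rightarrow> 'm::ab_group_add \<Rightarrow> 'm) \<Rightarrow> ('m \<Rightarrow> 'a \<Rightarrow> 'm) \<Rightarrow>
    ('m \<times> ('m \<Rightarrow> 'b) \<Rightarrow> int) set set" where
  "tensor lM rM = tcls lM rM ` freeT lM"

definition trep :: "'u set \<Rightarrow> 'u" where
  "trep X = (SOME u. u \<in> X)"

definition push :: "('x \<Rightarrow> 'z) \<Rightarrow> ('x \<Rightarrow> int) \<Rightarrow> ('z \<Rightarrow> int)" where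
  "push h u = (\<lambda>z. \<Sum>x\<in>{x. u x \<noteq> 0 \<and> h x = z}. u x)"

definition tadd :: "('b::ring_1 \<Rightarrow> 'm::ab_group_add \<Rightarrow> 'm) \<Rightarrow> ('m \<Rightarrow> 'a \<Rightarrow> 'm) \<Rightarrow>
    ('m \<times> ('m \<Rightarrow> 'b) \<Rightarrow> int) set \<Rightarrow> ('m \<times> ('m \<Rightarrow> 'b) \<Rightarrow> int) set \<Rightarrow> ('m \<times> ('m \<Rightarrow> 'b) \<Rightarrow> int) set" where
  "tadd lM rM X Y = tcls lM rM (trep X + trep Y)"

text \<open>B-bimodule structure: b (m \<otimes> f) = (b m) \<otimes> f and (m \<otimes> f) b = m \<otimes> (f b).\<close>
definition tlact :: "('b::ring_1 \<Rightarrow> 'm::ab_group_add \<Rightarrow> 'm) \<Rightarrow> ('m \<Rightarrow> 'a \<Rightarrow> 'm) \<Rightarrow>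
    'b \<Rightarrow> ('m \<times> ('m \<Rightarrow> 'b) \<Rightarrow> int) set \<Rightarrow> ('m \<times> ('m \<Rightarrow> 'b) \<Rightarrow> int) set" where
  "tlact lM rM b X = tcls lM rM (push (\<lambda>(m, f). (lM b m, f)) (trep X))"

definition tract :: "('b::ring_1 \<Rightarrow> 'm::ab_group_add \<Rightarrow> 'm) \<Rightarrow> ('m \<Rightarrow> 'a \<Rightarrow> 'm) \<Rightarrow>
    ('m \<times> ('m \<Rightarrow> 'b) \<Rightarrow> int) set \<Rightarrow> 'b \<Rightarrow> ('m \<times> ('m \<Rightarrow> 'b) \<Rightarrow> int) set" where
  "tract lM rM X b = tcls lM rM (push (\<lambda>(m, f). (m, hom_ract (*) f b)) (trep X))"

text \<open>Evaluation map ev_M(m \<otimes> f) = (m)f.\<close>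
definition evF :: "('m \<times> ('m \<Rightarrow> 'b::ring_1) \<Rightarrow> int) \<Rightarrow> 'b" where
  "evF u = (\<Sum>x\<in>{x. u x \<noteq> 0}. of_int (u x) * snd x (fst x))"

definition ev :: "('m \<times> ('m \<Rightarrow> 'b::ring_1) \<Rightarrow> int) set \<Rightarrow> 'b" where
  "ev X = evF (trep X)"

definition ker_ev :: "('b::ring_1 \<Rightarrow> 'm::ab_group_add \<Rightarrow> 'm) \<Rightarrow> ('m \<Rightarrow> 'a \<Rightarrow> 'm) \<Rightarrow>
    ('m \<times> ('m \<Rightarrow> 'b) \<Rightarrow> int) set set" where
  "ker_ev lM rM = {X \<in> tensor lM rM. ev X = 0}"

definition separable_bimod :: "('b::ring_1 \<Rightarrow> 'm::ab_group_add \<Rightarrow> 'm) \<Rightarrow> ('m \<Rightarrow> 'a::ring_1 \<Rightarrow> 'm) \<Rightarrow> bool" where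
  "separable_bimod lM rM \<longleftrightarrow>
     (\<exists>s. bihom UNIV (tensor lM rM) (+) (tadd lM rM) (*) (tlact lM rM) (*) (tract lM rM) s
          \<and> (\<forall>b. ev (s b) = b))"

definition E_class ::
  "('b::ring_1 \<Rightarrow> 'm::ab_group_add \<Rightarrow> 'm) \<Rightarrow> ('m \<Rightarrow> 'a::ring_1 \<Rightarrow> 'm) \<Rightarrow>
   ('b \<Rightarrow> 'y::ab_group_add \<Rightarrow> 'y) \<Rightarrow> ('y \<Rightarrow> 'b \<Rightarrow> 'y) \<Rightarrow>
   ('b \<Rightarrow> 'z::ab_group_add \<Rightarrow> 'z) \<Rightarrow> ('z \<Rightarrow> 'b \<Rightarrow> 'z) \<Rightarrow> ('y \<Rightarrow> 'z) \<Rightarrow> bool" where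
  "E_class lM rM lY rY lZ rZ f \<longleftrightarrow>
     bihom UNIV UNIV (+) (+) lY lZ rY rZ f \<and>
     (\<exists>g. bihom (lhom lM lZ) (lhom lM lY) (+) (+) (hom_lact rM) (hom_lact rM)
               (hom_ract rZ) (hom_ract rY) g \<and>
          (\<forall>h\<in>lhom lM lZ. f \<circ> g h = h))"

text \<open>E_{M,B}-projectivity of Ker(ev_M), relative to B-bimodules Y, Y' living on the types
  'y and 'z; the theorem quantifies over all such types.\<close>
definition formally_smooth ::
  "('b::ring_1 \<Rightarrow> 'm::ab_group_add \<Rightarrow> 'm) \<Rightarrow> ('m \<Rightarrow> 'a::ring_1 \<Rightarrow> 'm) \<Rightarrow>
   'y::ab_group_add itself \<Rightarrow> 'z::ab_group_add itself \<Rightarrow> bool" where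
  "formally_smooth lM rM (TYPE('y)) (TYPE('z)) \<longleftrightarrow>
     (\<forall>(lY :: 'b \<Rightarrow> 'y \<Rightarrow> 'y) rY (lZ :: 'b \<Rightarrow> 'z \<Rightarrow> 'z) rZ f \<phi>.
        bimodule lY rY \<and> bimodule lZ rZ \<and> E_class lM rM lY rY lZ rZ f \<and>
        bihom (ker_ev lM rM) UNIV (tadd lM rM) (+) (tlact lM rM) lZ (tract lM rM) rZ \<phi>
        \<longrightarrow> (\<exists>\<psi>. bihom (ker_ev lM rM) UNIV (tadd lM rM) (+) (tlact lM rM) lY (tract lM rM) rY \<psi>
                 \<and> (\<forall>X\<in>ker_ev lM rM. f (\<psi> X) = \<phi> X)))"

end

theory Submission
  imports Defs
begin

(*
  Write P = M \<otimes>\<^sub>A *M. By the tensor-hom adjunction, B-bimodule maps P \<rightarrow> Y correspond to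
  A-B-bimodule maps *M \<rightarrow> \<^sub>BHom(M, Y). Given f : Y \<rightarrow> Y' in E_{M,B} with A-B-linear right
  inverse g of \<^sub>BHom(M, f), a map \<Phi> : P \<rightarrow> Y' therefore lifts to the adjunct of g \<circ> \<chi>, where \<chi>
  is the adjunct of \<Phi>; so P itself is E_{M,B}-projective.
  If M is separable with bimodule section s of ev, then X \<mapsto> X - s (ev X) is a bimodule retraction
  of P onto Ker ev, and a retract of an E_{M,B}-projective bimodule is E_{M,B}-projective.
  If ev is injective, Ker ev = 0 and there is nothing to lift.
*)

lemma bihom_comp:
  assumes "bihom S T addS addT lS lT rS rT \<phi>" and "bihom T U addT addU lT lU rT rU \<psi>"
  shows "bihom S U addS addU lS lU rS rU (\<psi> \<circ> \<phi>)"
  using assms unfolding bihom_def by auto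

lemma bihom_subset:
  "bihom S T addS addT lS lT rS rT \<phi> \<Longrightarrow> S' \<subseteq> S \<Longrightarrow> bihom S' T addS addT lS lT rS rT \<phi>"
  unfolding bihom_def by blast

lemma bimodule_ring: "bimodule ((*) :: 'r::ring_1 \<Rightarrow> 'r \<Rightarrow> 'r) (*)"
  unfolding bimodule_def by (simp add: algebra_simps)

section \<open>Finitely supported integer functions\<close>

definition fin_supp :: "('x \<Rightarrow> int) \<Rightarrow> bool" where
  "fin_supp u \<longleftrightarrow> finite {x. u x \<noteq> 0}"

definition lin_ext :: "('r::ring_1 \<Rightarrow> 'y::ab_group_add \<Rightarrow> 'y) \<Rightarrow> ('x \<Rightarrow> 'y) \<Rightarrow> ('x \<Rightarrow> int) \<Rightarrow> 'y" where
  "lin_ext l G u = (\<Sum>x\<in>{x. u x \<noteq> 0}. l (of_int (u x)) (G x))"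

lemma fin_supp_add: "fin_supp u \<Longrightarrow> fin_supp v \<Longrightarrow> fin_supp (u + v)"
  unfolding fin_supp_def by (rule finite_subset[of _ "{x. u x \<noteq> 0} \<union> {x. v x \<noteq> 0}"]) auto

lemma fin_supp_diff: "fin_supp u \<Longrightarrow> fin_supp v \<Longrightarrow> fin_supp (u - v)"
  unfolding fin_supp_def by (rule finite_subset[of _ "{x. u x \<noteq> 0} \<union> {x. v x \<noteq> 0}"]) auto

lemma fin_supp_delta: "fin_supp (delta x)"
  unfolding fin_supp_def delta_def by simp

lemma fin_supp_sum_delta:
  assumes "fin_supp u"
  shows "(\<Sum>x\<in>{x. u x \<noteq> 0}. (\<lambda>y. u x * delta x y)) = u"
proof
  fix y
  have "(\<Sum>x\<in>{x. u x \<noteq> 0}. (\<lambda>y. u x * delta x y)) y = (\<Sum>x\<in>{x. u x \<noteq> 0}. u x * delta x y)"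
    using sum_comp_morphism[of "\<lambda>F. F y" "\<lambda>x y. u x * delta x y"] by (simp add: o_def)
  also have "\<dots> = (\<Sum>x\<in>{x. u x \<noteq> 0}. if x = y then u y else 0)"
    by (rule sum.cong) (auto simp: delta_def)
  also have "\<dots> = u y"
    using assms unfolding fin_supp_def by auto
  finally show "(\<Sum>x\<in>{x. u x \<noteq> 0}. (\<lambda>y. u x * delta x y)) y = u y" .
qed

lemma lin_ext_cong: "(\<And>x. u x \<noteq> 0 \<Longrightarrow> G x = G' x) \<Longrightarrow> lin_ext l G u = lin_ext l G' u"
  unfolding lin_ext_def by (rule sum.cong) auto

lemma lin_ext_comp:
  assumes "\<And>y y'. f (y + y') = f y + f y'" and "\<And>k y. f (l (of_int k) y) = l' (of_int k) (f y)"
  shows "f (lin_ext l G u) = lin_ext l' (f \<circ> G) u"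
proof -
  have "f 0 = 0" using assms(1)[of 0 0] by simp
  then have "(\<Sum>x\<in>{x. u x \<noteq> 0}. f (l (of_int (u x)) (G x))) = f (lin_ext l G u)"
    unfolding lin_ext_def by (rule sum_comp_morphism[OF _ assms(1), unfolded o_def])
  then show ?thesis unfolding lin_ext_def by (simp add: assms(2) o_def)
qed

lemma push_superset:
  assumes "finite S" and "{x. u x \<noteq> 0} \<subseteq> S"
  shows "push h u z = (\<Sum>x\<in>{x\<in>S. h x = z}. u x)"
  unfolding push_def using assms by (intro sum.mono_neutral_left) auto

lemma push_supp: "{z. push h u z \<noteq> 0} \<subseteq> h ` {x. u x \<noteq> 0}"
proof
  fix z assume "z \<in> {z. push h u z \<noteq> 0}"
  then have "{x. u x \<noteq> 0 \<and> h x = z} \<noteq> {}" unfolding push_def by force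
  then show "z \<in> h ` {x. u x \<noteq> 0}" by blast
qed

lemma fin_supp_push: "fin_supp u \<Longrightarrow> fin_supp (push h u)"
  unfolding fin_supp_def by (rule finite_subset[OF push_supp finite_imageI])

lemma push_add:
  assumes "fin_supp u" and "fin_supp v"
  shows "push h (u + v) = push h u + push h v"
proof
  fix z
  let ?S = "{x. u x \<noteq> 0} \<union> {x. v x \<noteq> 0}"
  have S: "finite ?S" using assms unfolding fin_supp_def by simp
  have "push h (u + v) z = (\<Sum>x\<in>{x\<in>?S. h x = z}. u x + v x)"
    by (subst push_superset[OF S]) auto
  also have "\<dots> = push h u z + push h v z"
    by (simp add: push_superset[OF S] sum.distrib)
  finally show "push h (u + v) z = (push h u + push h v) z" by simp
qed

lemma push_uminus: "push h (- u) = - push h u"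
  unfolding push_def by (simp add: sum_negf fun_eq_iff)

lemma push_diff: "fin_supp u \<Longrightarrow> fin_supp v \<Longrightarrow> push h (u - v) = push h u - push h v"
  using push_add[of u "- v" h] push_uminus[of h v]
  by (simp add: fin_supp_def)

lemma push_delta: "push h (delta x) = delta (h x)"
proof
  fix z
  have "{y. delta x y \<noteq> 0 \<and> h y = z} = (if h x = z then {x} else {})"
    unfolding delta_def by auto
  then show "push h (delta x) z = delta (h x) z" unfolding push_def by (simp add: delta_def)
qed

context
  fixes l :: "'r::ring_1 \<Rightarrow> 'x::ab_group_add \<Rightarrow> 'x" and r :: "'x \<Rightarrow> 's::ring_1 \<Rightarrow> 'x"
  assumes bimod: "bimodule l r"
begin

lemma bimodule_l_add: "l a (x + y) = l a x + l a y"
  using bimod unfolding bimodule_def by simp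

lemma bimodule_l_add_scalar: "l (a + b) x = l a x + l b x"
  using bimod unfolding bimodule_def by blast

lemma bimodule_l_mult: "l (a * b) x = l a (l b x)"
  using bimod unfolding bimodule_def by blast

lemma bimodule_l_one: "l 1 x = x"
  using bimod unfolding bimodule_def by blast

lemma bimodule_r_add: "r (x + y) s = r x s + r y s"
  using bimod unfolding bimodule_def by blast

lemma bimodule_lr_commute: "l a (r x s) = r (l a x) s"
  using bimod unfolding bimodule_def by blast

lemma bimodule_l_zero: "l a 0 = 0"
  using bimodule_l_add[of a 0 0] by simp

lemma bimodule_r_zero: "r 0 s = 0"
  using bimodule_r_add[of 0 0 s] by simp

lemma bimodule_l_zero_scalar: "l 0 x = 0"
  using bimodule_l_add_scalar[of 0 0 x] by simp

lemma bimodule_l_minus_scalar: "l (- a) x = - l a x"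
  using bimodule_l_add_scalar[of "- a" a x] bimodule_l_zero_scalar[of x]
  by (simp add: eq_neg_iff_add_eq_0)

lemma bimodule_l_sum_scalar: "l (\<Sum>i\<in>S. a i) x = (\<Sum>i\<in>S. l (a i) x)"
  using sum_comp_morphism[of "\<lambda>a. l a x" a S]
  by (simp add: bimodule_l_zero_scalar bimodule_l_add_scalar o_def)

lemma lin_ext_superset:
  assumes "finite S" and "{x. u x \<noteq> 0} \<subseteq> S"
  shows "lin_ext l G u = (\<Sum>x\<in>S. l (of_int (u x)) (G x))"
  unfolding lin_ext_def using assms
  by (intro sum.mono_neutral_left) (auto simp: bimodule_l_zero_scalar)

lemma lin_ext_add:
  assumes "fin_supp u" and "fin_supp v"
  shows "lin_ext l G (u + v) = lin_ext l G u + lin_ext l G v"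
proof -
  let ?S = "{x. u x \<noteq> 0} \<union> {x. v x \<noteq> 0}"
  have S: "finite ?S" using assms unfolding fin_supp_def by simp
  have "lin_ext l G (u + v) = (\<Sum>x\<in>?S. l (of_int (u x + v x)) (G x))"
    by (subst lin_ext_superset[OF S]) auto
  also have "\<dots> = lin_ext l G u + lin_ext l G v"
    by (simp add: lin_ext_superset[OF S] bimodule_l_add_scalar sum.distrib)
  finally show ?thesis .
qed

lemma lin_ext_diff:
  assumes "fin_supp u" and "fin_supp v"
  shows "lin_ext l G (u - v) = lin_ext l G u - lin_ext l G v"
proof -
  have "lin_ext l G (- v) = - lin_ext l G v"
    unfolding lin_ext_def by (simp add: bimodule_l_minus_scalar sum_negf)
  moreover have "fin_supp (- v)" using assms(2) unfolding fin_supp_def by simp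
  ultimately show ?thesis using lin_ext_add[OF assms(1), of "- v" G] by simp
qed

lemma lin_ext_delta: "lin_ext l G (delta x) = G x"
proof -
  have "{y. delta x y \<noteq> 0} = {x}" unfolding delta_def by auto
  then show ?thesis unfolding lin_ext_def by (simp add: delta_def bimodule_l_one)
qed

lemma lin_ext_push:
  assumes "fin_supp u"
  shows "lin_ext l G (push h u) = lin_ext l (G \<circ> h) u"
proof -
  let ?S = "{x. u x \<noteq> 0}"
  have S: "finite ?S" using assms unfolding fin_supp_def .
  have "lin_ext l G (push h u) = (\<Sum>z\<in>h ` ?S. l (of_int (push h u z)) (G z))"
    by (rule lin_ext_superset) (use S push_supp[of h u] in auto)
  also have "\<dots> = (\<Sum>z\<in>h ` ?S. \<Sum>x\<in>{x\<in>?S. h x = z}. l (of_int (u x)) (G (h x)))"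
    by (intro sum.cong refl) (simp add: push_superset[OF S] bimodule_l_sum_scalar)
  also have "\<dots> = lin_ext l (G \<circ> h) u"
    unfolding lin_ext_def o_def by (rule sum.image_gen[OF S, symmetric])
  finally show ?thesis .
qed

lemma lin_ext_lact: "lin_ext l (\<lambda>x. l b (G x)) u = l b (lin_ext l G u)"
proof -
  have "l (of_int k) (l b y) = l b (l (of_int k) y)" for k y
    by (metis bimodule_l_mult mult_of_int_commute)
  then show ?thesis
    unfolding lin_ext_def using sum_comp_morphism[of "l b"]
    by (simp add: bimodule_l_zero bimodule_l_add o_def)
qed

lemma lin_ext_ract: "lin_ext l (\<lambda>x. r (G x) s) u = r (lin_ext l G u) s"
  unfolding lin_ext_def using sum_comp_morphism[of "\<lambda>y. r y s"]
  by (simp add: bimodule_r_zero bimodule_r_add bimodule_lr_commute o_def)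

end

lemma gen_subgroup_subset:
  assumes "G \<subseteq> C" and "0 \<in> C"
    and "\<And>u v. u \<in> C \<Longrightarrow> v \<in> C \<Longrightarrow> u + v \<in> C" and "\<And>u. u \<in> C \<Longrightarrow> - u \<in> C"
  shows "gen_subgroup G \<subseteq> C"
proof
  fix w assume "w \<in> gen_subgroup G"
  then show "w \<in> C" by induction (use assms in auto)
qed

lemma gen_subgroup_diff: "u \<in> gen_subgroup G \<Longrightarrow> v \<in> gen_subgroup G \<Longrightarrow> u - v \<in> gen_subgroup G"
  using gen_subgroup.add[OF _ gen_subgroup.neg, of u G v] by simp

lemma gen_subgroup_diff_trans:
  "u - v \<in> gen_subgroup G \<Longrightarrow> v - w \<in> gen_subgroup G \<Longrightarrow> u - w \<in> gen_subgroup G"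
  using gen_subgroup.add[of "u - v" G "v - w"] by simp

lemma gen_subgroup_sum: "(\<And>i. i \<in> S \<Longrightarrow> F i \<in> gen_subgroup G) \<Longrightarrow> sum F S \<in> gen_subgroup G"
  by (induction S rule: infinite_finite_induct) (auto intro: gen_subgroup.intros)

lemma gen_subgroup_int_mult:
  fixes G :: "('x \<Rightarrow> int) set"
  assumes v: "v \<in> gen_subgroup G"
  shows "(\<lambda>y. k * v y) \<in> gen_subgroup G"
proof (induction k rule: int_induct[of _ 0])
  case base
  have "(\<lambda>y. 0 * v y) = 0" by (simp add: fun_eq_iff)
  then show ?case by (simp add: gen_subgroup.zero)
next
  case (step1 i)
  have "(\<lambda>y. (i + 1) * v y) = (\<lambda>y. i * v y) + v" by (simp add: fun_eq_iff algebra_simps)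
  then show ?case using step1 v by (simp add: gen_subgroup.add)
next
  case (step2 i)
  have "(\<lambda>y. (i - 1) * v y) = (\<lambda>y. i * v y) - v" by (simp add: fun_eq_iff algebra_simps)
  then show ?case using step2 v by (simp add: gen_subgroup_diff)
qed

lemma gen_subgroup_additive_vanish:
  assumes additive: "\<And>u v. u \<in> gen_subgroup G \<Longrightarrow> v \<in> gen_subgroup G \<Longrightarrow> F (u + v) = F u + F v"
    and vanish: "\<And>g. g \<in> G \<Longrightarrow> F g = (0 :: 'y::ab_group_add)"
    and "w \<in> gen_subgroup G"
  shows "F w = 0"
  using \<open>w \<in> gen_subgroup G\<close>
proof induction
  case zero
  show ?case using additive[OF gen_subgroup.zero gen_subgroup.zero] by simp
next
  case (gen g)
  then show ?case by (rule vanish)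
next
  case (add u v)
  then show ?case using additive by simp
next
  case (neg u)
  have "F (- u + u) = F (- u) + F u" by (rule additive) (use neg.hyps in \<open>auto intro: gen_subgroup.neg\<close>)
  moreover have "F 0 = 0" using additive[OF gen_subgroup.zero gen_subgroup.zero] by simp
  ultimately show ?case using neg.IH by simp
qed

lemma gen_subgroup_additive_image:
  assumes additive: "\<And>u v. u \<in> gen_subgroup G \<Longrightarrow> v \<in> gen_subgroup G \<Longrightarrow> P (u + v) = P u + P v"
    and uminus: "\<And>u. P (- u) = - P u"
    and image: "\<And>g. g \<in> G \<Longrightarrow> P g \<in> gen_subgroup G'"
    and "w \<in> gen_subgroup G"
  shows "P w \<in> gen_subgroup G'"
  using \<open>w \<in> gen_subgroup G\<close>
proof induction
  case zero
  have "P 0 = 0" using additive[OF gen_subgroup.zero gen_subgroup.zero] by simp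
  then show ?case by (simp add: gen_subgroup.zero)
next
  case (gen g)
  then show ?case by (rule image)
next
  case (add u v)
  then show ?case using additive by (simp add: gen_subgroup.add)
next
  case (neg u)
  then show ?case by (simp add: uminus gen_subgroup.neg)
qed

section \<open>The tensor product of M with its dual over A\<close>

abbreviation lact_pair :: "('b \<Rightarrow> 'm \<Rightarrow> 'm) \<Rightarrow> 'b \<Rightarrow> 'm \<times> ('m \<Rightarrow> 'b) \<Rightarrow> 'm \<times> ('m \<Rightarrow> 'b)" where
  "lact_pair lM b \<equiv> \<lambda>(m, f). (lM b m, f)"

abbreviation ract_pair :: "'b::ring_1 \<Rightarrow> 'm \<times> ('m \<Rightarrow> 'b) \<Rightarrow> 'm \<times> ('m \<Rightarrow> 'b)" where
  "ract_pair b \<equiv> \<lambda>(m, f). (m, hom_ract (*) f b)"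

abbreviation dual_hom where
  "dual_hom lM rM lY rY \<kappa> \<equiv>
     bihom (dual lM) (lhom lM lY) (+) (+) (hom_lact rM) (hom_lact rM) (hom_ract (*)) (hom_ract rY) \<kappa>"

abbreviation tensor_hom where
  "tensor_hom lM rM lY rY \<Phi> \<equiv>
     bihom (tensor lM rM) UNIV (tadd lM rM) (+) (tlact lM rM) lY (tract lM rM) rY \<Phi>"

definition tensor_lift ::
  "('b::ring_1 \<Rightarrow> 'y::ab_group_add \<Rightarrow> 'y) \<Rightarrow> (('m \<Rightarrow> 'b) \<Rightarrow> 'm \<Rightarrow> 'y) \<Rightarrow> ('m \<times> ('m \<Rightarrow> 'b) \<Rightarrow> int) set \<Rightarrow> 'y"
  where "tensor_lift lY \<kappa> X = lin_ext lY (\<lambda>(m, f). \<kappa> f m) (trep X)"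

lemma ev_eq_tensor_lift: "ev = tensor_lift (*) (\<lambda>f. f)"
  by (simp add: fun_eq_iff ev_def evF_def tensor_lift_def lin_ext_def case_prod_beta)

lemma dual_homD:
  assumes \<kappa>: "dual_hom lM rM lY rY \<kappa>" and f: "f \<in> dual lM"
  shows "\<kappa> f (m + m') = \<kappa> f m + \<kappa> f m'"
    and "\<kappa> f (lM b m) = lY b (\<kappa> f m)"
    and "g \<in> dual lM \<Longrightarrow> \<kappa> (f + g) m = \<kappa> f m + \<kappa> g m"
    and "\<kappa> (hom_lact rM a f) m = \<kappa> f (rM m a)"
    and "\<kappa> (hom_ract (*) f b) m = rY (\<kappa> f m) b"
  using assms unfolding bihom_def lhom_def hom_lact_def hom_ract_def by (auto dest: fun_cong)

context
  fixes lM :: "'b::ring_1 \<Rightarrow> 'm::ab_group_add \<Rightarrow> 'm" and rM :: "'m \<Rightarrow> 'a::ring_1 \<Rightarrow> 'm"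
  assumes bimod_M: "bimodule lM rM"
begin

abbreviation "rel_subgroup \<equiv> gen_subgroup (tens_rels lM rM)"

lemma dual_iff: "f \<in> dual lM \<longleftrightarrow> (\<forall>x y. f (x + y) = f x + f y) \<and> (\<forall>b x. f (lM b x) = b * f x)"
  unfolding dual_def lhom_def by simp

lemma dual_add: "f \<in> dual lM \<Longrightarrow> g \<in> dual lM \<Longrightarrow> f + g \<in> dual lM"
  unfolding dual_iff by (simp add: algebra_simps)

lemma dual_hom_lact: "f \<in> dual lM \<Longrightarrow> hom_lact rM a f \<in> dual lM"
  unfolding dual_iff hom_lact_def
  by (simp add: bimodule_r_add[OF bimod_M] bimodule_lr_commute[OF bimod_M, symmetric])

lemma dual_hom_ract: "f \<in> dual lM \<Longrightarrow> hom_ract (*) f b \<in> dual lM"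
  unfolding dual_iff hom_ract_def by (simp add: algebra_simps)

lemma freeT_iff: "u \<in> freeT lM \<longleftrightarrow> fin_supp u \<and> (\<forall>x. u x \<noteq> 0 \<longrightarrow> snd x \<in> dual lM)"
  unfolding freeT_def fin_supp_def by simp

lemma freeT_fin_supp: "u \<in> freeT lM \<Longrightarrow> fin_supp u"
  unfolding freeT_iff by simp

lemma freeT_dual: "u \<in> freeT lM \<Longrightarrow> u x \<noteq> 0 \<Longrightarrow> snd x \<in> dual lM"
  unfolding freeT_iff by blast

lemma freeT_add:
  assumes "u \<in> freeT lM" and "v \<in> freeT lM"
  shows "u + v \<in> freeT lM"
  unfolding freeT_iff
proof (intro conjI allI impI)
  show "fin_supp (u + v)" using assms by (simp add: freeT_fin_supp fin_supp_add)
  fix x assume "(u + v) x \<noteq> 0"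
  then have "u x \<noteq> 0 \<or> v x \<noteq> 0" by auto
  then show "snd x \<in> dual lM" using assms freeT_dual by blast
qed

lemma freeT_uminus: "u \<in> freeT lM \<Longrightarrow> - u \<in> freeT lM"
  unfolding freeT_iff fin_supp_def by simp

lemma freeT_diff: "u \<in> freeT lM \<Longrightarrow> v \<in> freeT lM \<Longrightarrow> u - v \<in> freeT lM"
  using freeT_add[of u "- v"] freeT_uminus[of v] by simp

lemma freeT_zero: "0 \<in> freeT lM"
  unfolding freeT_iff fin_supp_def by simp

lemma freeT_delta: "snd x \<in> dual lM \<Longrightarrow> delta x \<in> freeT lM"
  unfolding freeT_iff using fin_supp_delta[of x] by (auto simp del: split_paired_All simp: delta_def)

lemma freeT_push:
  assumes "\<And>x. snd x \<in> dual lM \<Longrightarrow> snd (h x) \<in> dual lM" and "u \<in> freeT lM"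
  shows "push h u \<in> freeT lM"
  unfolding freeT_iff
proof (intro conjI allI impI)
  show "fin_supp (push h u)" using assms(2) by (simp add: freeT_fin_supp fin_supp_push)
  fix z assume "push h u z \<noteq> 0"
  then obtain x where "u x \<noteq> 0" and "z = h x" using push_supp[of h u] by blast
  then show "snd z \<in> dual lM" using assms freeT_dual by blast
qed

lemma freeT_push_lact: "u \<in> freeT lM \<Longrightarrow> push (lact_pair lM b) u \<in> freeT lM"
  by (rule freeT_push) (simp add: case_prod_beta)

lemma freeT_push_ract: "u \<in> freeT lM \<Longrightarrow> push (ract_pair b) u \<in> freeT lM"
  by (rule freeT_push) (simp add: case_prod_beta dual_hom_ract)

lemma freeT_eq_gen_subgroup: "freeT lM = gen_subgroup {delta x | x. snd x \<in> dual lM}"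
proof
  show "gen_subgroup {delta x | x. snd x \<in> dual lM} \<subseteq> freeT lM"
    by (rule gen_subgroup_subset) (auto intro: freeT_delta freeT_zero freeT_add freeT_uminus)
  show "freeT lM \<subseteq> gen_subgroup {delta x | x. snd x \<in> dual lM}"
  proof
    fix u assume u: "u \<in> freeT lM"
    have "(\<Sum>x\<in>{x. u x \<noteq> 0}. (\<lambda>y. u x * delta x y)) \<in> gen_subgroup {delta x | x. snd x \<in> dual lM}"
      using freeT_dual[OF u] by (intro gen_subgroup_sum gen_subgroup_int_mult gen_subgroup.gen) blast
    then show "u \<in> gen_subgroup {delta x | x. snd x \<in> dual lM}"
      using fin_supp_sum_delta[OF freeT_fin_supp[OF u]] by simp
  qed
qed

lemma tens_rels_cases [consumes 1, case_names add_left add_right balanced]: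
  assumes "g \<in> tens_rels lM rM"
  obtains m m' f where "f \<in> dual lM" "g = delta (m + m', f) - delta (m, f) - delta (m', f)"
  | m f f' where "f \<in> dual lM" "f' \<in> dual lM" "g = delta (m, f + f') - delta (m, f) - delta (m, f')"
  | m a f where "f \<in> dual lM" "g = delta (rM m a, f) - delta (m, hom_lact rM a f)"
  using assms unfolding tens_rels_def by blast

lemma rel_subgroup_freeT: "w \<in> rel_subgroup \<Longrightarrow> w \<in> freeT lM"
proof -
  have "tens_rels lM rM \<subseteq> freeT lM"
  proof
    fix g assume "g \<in> tens_rels lM rM"
    then show "g \<in> freeT lM"
      by (cases rule: tens_rels_cases) (auto intro!: freeT_diff freeT_delta dual_add dual_hom_lact)
  qed
  then have "rel_subgroup \<subseteq> freeT lM"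
    by (rule gen_subgroup_subset) (auto intro: freeT_zero freeT_add freeT_uminus)
  then show "w \<in> rel_subgroup \<Longrightarrow> w \<in> freeT lM" by blast
qed

lemma rel_add_left: "f \<in> dual lM \<Longrightarrow> delta (m + m', f) - delta (m, f) - delta (m', f) \<in> rel_subgroup"
  by (rule gen_subgroup.gen) (unfold tens_rels_def, blast)

lemma rel_add_right:
  "f \<in> dual lM \<Longrightarrow> f' \<in> dual lM \<Longrightarrow> delta (m, f + f') - delta (m, f) - delta (m, f') \<in> rel_subgroup"
  by (rule gen_subgroup.gen) (unfold tens_rels_def, blast)

lemma rel_balanced: "f \<in> dual lM \<Longrightarrow> delta (rM m a, f) - delta (m, hom_lact rM a f) \<in> rel_subgroup"
  by (rule gen_subgroup.gen) (unfold tens_rels_def, blast)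

lemma tcls_eq_iff:
  assumes "u \<in> freeT lM" and "v \<in> freeT lM"
  shows "tcls lM rM u = tcls lM rM v \<longleftrightarrow> u - v \<in> rel_subgroup"
proof
  assume "tcls lM rM u = tcls lM rM v"
  moreover have "v \<in> tcls lM rM v" using assms(2) unfolding tcls_def by (simp add: gen_subgroup.zero)
  ultimately show "u - v \<in> rel_subgroup" unfolding tcls_def by blast
next
  assume uv: "u - v \<in> rel_subgroup"
  have "u - w \<in> rel_subgroup \<longleftrightarrow> v - w \<in> rel_subgroup" for w
    using gen_subgroup_diff[OF _ uv, of "u - w"] gen_subgroup.add[OF uv, of "v - w"] by auto
  then show "tcls lM rM u = tcls lM rM v" unfolding tcls_def by blast
qed

lemma tcls_in_tensor: "u \<in> freeT lM \<Longrightarrow> tcls lM rM u \<in> tensor lM rM"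
  unfolding tensor_def by blast

lemma tensorE:
  assumes "X \<in> tensor lM rM"
  obtains u where "u \<in> freeT lM" and "X = tcls lM rM u"
  using assms unfolding tensor_def by blast

lemma trep_tcls:
  assumes u: "u \<in> freeT lM"
  shows "trep (tcls lM rM u) \<in> freeT lM" and "trep (tcls lM rM u) - u \<in> rel_subgroup"
proof -
  have "u \<in> tcls lM rM u" using u unfolding tcls_def by (simp add: gen_subgroup.zero)
  then have "trep (tcls lM rM u) \<in> tcls lM rM u" unfolding trep_def by (rule someI[where x = u])
  then have "trep (tcls lM rM u) \<in> freeT lM" and "u - trep (tcls lM rM u) \<in> rel_subgroup"
    unfolding tcls_def by blast+
  then show "trep (tcls lM rM u) \<in> freeT lM" and "trep (tcls lM rM u) - u \<in> rel_subgroup"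
    using gen_subgroup.neg[of "u - trep (tcls lM rM u)"] by simp_all
qed

lemma tensor_trep:
  assumes "X \<in> tensor lM rM"
  shows "trep X \<in> freeT lM" and "tcls lM rM (trep X) = X"
proof -
  obtain u where u: "u \<in> freeT lM" "X = tcls lM rM u" using assms by (rule tensorE)
  show "trep X \<in> freeT lM" using trep_tcls(1)[OF u(1)] u(2) by simp
  show "tcls lM rM (trep X) = X"
    using tcls_eq_iff[OF trep_tcls(1) u(1)] trep_tcls(2) u by simp
qed

lemma tadd_tcls:
  assumes "u \<in> freeT lM" and "v \<in> freeT lM"
  shows "tadd lM rM (tcls lM rM u) (tcls lM rM v) = tcls lM rM (u + v)"
proof -
  have "(trep (tcls lM rM u) - u) + (trep (tcls lM rM v) - v) \<in> rel_subgroup"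
    using assms by (simp add: trep_tcls gen_subgroup.add)
  then show ?thesis
    unfolding tadd_def using assms
    by (subst tcls_eq_iff) (auto simp: trep_tcls freeT_add algebra_simps)
qed

lemma push_rel_subgroup:
  assumes "\<And>g. g \<in> tens_rels lM rM \<Longrightarrow> push h g \<in> rel_subgroup" and "w \<in> rel_subgroup"
  shows "push h w \<in> rel_subgroup"
proof (rule gen_subgroup_additive_image[of _ "push h"])
  show "push h (u + v) = push h u + push h v" if "u \<in> rel_subgroup" "v \<in> rel_subgroup" for u v
    using that by (simp add: push_add freeT_fin_supp rel_subgroup_freeT)
qed (use assms push_uminus in auto)

lemma push_delta_diff: "push h (delta x - delta y) = delta (h x) - delta (h y)"
  by (simp add: push_diff fin_supp_delta push_delta)

lemma push_delta_diff2:
  "push h (delta x - delta y - delta z) = delta (h x) - delta (h y) - delta (h z)"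
  by (simp add: push_diff fin_supp_diff fin_supp_delta push_delta)

lemma push_lact_tens_rels:
  assumes "g \<in> tens_rels lM rM"
  shows "push (lact_pair lM b) g \<in> rel_subgroup"
  using assms
proof (cases rule: tens_rels_cases)
  case (add_left m m' f)
  then show ?thesis
    using rel_add_left[of f "lM b m" "lM b m'"] by (simp add: push_delta_diff2 bimodule_l_add[OF bimod_M])
next
  case (add_right m f f')
  then show ?thesis using rel_add_right[of f f' "lM b m"] by (simp add: push_delta_diff2)
next
  case (balanced m a f)
  then show ?thesis
    using rel_balanced[of f "lM b m" a] by (simp add: push_delta_diff bimodule_lr_commute[OF bimod_M])
qed

lemma push_ract_tens_rels:
  assumes "g \<in> tens_rels lM rM"
  shows "push (ract_pair b) g \<in> rel_subgroup"
  using assms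
proof (cases rule: tens_rels_cases)
  case (add_left m m' f)
  then show ?thesis
    using rel_add_left[OF dual_hom_ract[OF add_left(1), of b], of m m'] by (simp add: push_delta_diff2)
next
  case (add_right m f f')
  have "hom_ract (*) (f + f') b = hom_ract (*) f b + hom_ract (*) f' b"
    unfolding hom_ract_def by (simp add: fun_eq_iff distrib_right)
  with add_right show ?thesis
    using rel_add_right[OF dual_hom_ract[OF add_right(1), of b] dual_hom_ract[OF add_right(2), of b], of m]
    by (simp add: push_delta_diff2)
next
  case (balanced m a f)
  have "hom_ract (*) (hom_lact rM a f) b = hom_lact rM a (hom_ract (*) f b)"
    unfolding hom_ract_def hom_lact_def ..
  with balanced show ?thesis
    using rel_balanced[OF dual_hom_ract[OF balanced(1), of b], of m a] by (simp add: push_delta_diff)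
qed

lemma tcls_push_trep:
  assumes rels: "\<And>g. g \<in> tens_rels lM rM \<Longrightarrow> push h g \<in> rel_subgroup"
    and h_dual: "\<And>x. snd x \<in> dual lM \<Longrightarrow> snd (h x) \<in> dual lM"
    and u: "u \<in> freeT lM"
  shows "tcls lM rM (push h (trep (tcls lM rM u))) = tcls lM rM (push h u)"
proof -
  have "push h (trep (tcls lM rM u) - u) \<in> rel_subgroup"
    by (rule push_rel_subgroup[OF rels trep_tcls(2)[OF u]])
  then show ?thesis
    using u trep_tcls(1)[OF u]
    by (subst tcls_eq_iff) (auto intro: freeT_push h_dual simp: push_diff freeT_fin_supp)
qed

lemma tlact_tcls:
  "u \<in> freeT lM \<Longrightarrow> tlact lM rM b (tcls lM rM u) = tcls lM rM (push (lact_pair lM b) u)"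
  unfolding tlact_def by (rule tcls_push_trep[OF push_lact_tens_rels]) (auto simp: case_prod_beta)

lemma tract_tcls:
  "u \<in> freeT lM \<Longrightarrow> tract lM rM (tcls lM rM u) b = tcls lM rM (push (ract_pair b) u)"
  unfolding tract_def
  by (rule tcls_push_trep[OF push_ract_tens_rels]) (auto simp: case_prod_beta dual_hom_ract)

lemma tcls_delta_add_left:
  assumes "f \<in> dual lM"
  shows "tcls lM rM (delta (m + m', f)) = tadd lM rM (tcls lM rM (delta (m, f))) (tcls lM rM (delta (m', f)))"
  using assms rel_add_left[OF assms, of m m']
  by (simp add: tadd_tcls freeT_delta freeT_add tcls_eq_iff diff_diff_eq)

lemma tcls_delta_add_right:
  assumes "f \<in> dual lM" and "f' \<in> dual lM"
  shows "tcls lM rM (delta (m, f + f')) = tadd lM rM (tcls lM rM (delta (m, f))) (tcls lM rM (delta (m, f')))"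
  using assms rel_add_right[OF assms, of m]
  by (simp add: tadd_tcls freeT_delta freeT_add dual_add tcls_eq_iff diff_diff_eq)

lemma tcls_delta_balanced:
  assumes "f \<in> dual lM"
  shows "tcls lM rM (delta (rM m a, f)) = tcls lM rM (delta (m, hom_lact rM a f))"
  using assms rel_balanced[OF assms, of m a] by (simp add: freeT_delta dual_hom_lact tcls_eq_iff)

lemma tlact_tcls_delta:
  "f \<in> dual lM \<Longrightarrow> tlact lM rM b (tcls lM rM (delta (m, f))) = tcls lM rM (delta (lM b m, f))"
  by (simp add: tlact_tcls freeT_delta push_delta)

lemma tract_tcls_delta:
  "f \<in> dual lM \<Longrightarrow> tract lM rM (tcls lM rM (delta (m, f))) b = tcls lM rM (delta (m, hom_ract (*) f b))"
  by (simp add: tract_tcls freeT_delta push_delta)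

subsection \<open>Tensor-hom adjunction and E-projectivity\<close>

lemma lin_ext_rel_subgroup:
  assumes bY: "bimodule lY rY" and \<kappa>: "dual_hom lM rM lY rY \<kappa>" and w: "w \<in> rel_subgroup"
  shows "lin_ext lY (\<lambda>(m, f). \<kappa> f m) w = 0"
proof (rule gen_subgroup_additive_vanish[OF _ _ w])
  let ?G = "\<lambda>(m, f). \<kappa> f m"
  show "lin_ext lY ?G (u + v) = lin_ext lY ?G u + lin_ext lY ?G v"
    if "u \<in> rel_subgroup" "v \<in> rel_subgroup" for u v
    using that by (simp add: lin_ext_add[OF bY] freeT_fin_supp rel_subgroup_freeT)
  have delta_diff: "lin_ext lY ?G (delta x - delta y) = ?G x - ?G y"
    and delta_diff2: "lin_ext lY ?G (delta x - delta y - delta z) = ?G x - ?G y - ?G z" for x y z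
    by (simp_all add: lin_ext_diff[OF bY] fin_supp_diff fin_supp_delta lin_ext_delta[OF bY])
  show "lin_ext lY ?G g = 0" if "g \<in> tens_rels lM rM" for g
    using that
  proof (cases rule: tens_rels_cases)
    case (add_left m m' f)
    then show ?thesis by (simp add: delta_diff2 dual_homD[OF \<kappa>])
  next
    case (add_right m f f')
    then show ?thesis by (simp add: delta_diff2 dual_homD[OF \<kappa>])
  next
    case (balanced m a f)
    then show ?thesis by (simp add: delta_diff dual_homD[OF \<kappa>])
  qed
qed

lemma tensor_lift_tcls:
  assumes bY: "bimodule lY rY" and \<kappa>: "dual_hom lM rM lY rY \<kappa>" and u: "u \<in> freeT lM"
  shows "tensor_lift lY \<kappa> (tcls lM rM u) = lin_ext lY (\<lambda>(m, f). \<kappa> f m) u"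
proof -
  have "lin_ext lY (\<lambda>(m, f). \<kappa> f m) (trep (tcls lM rM u) - u) = 0"
    by (rule lin_ext_rel_subgroup[OF bY \<kappa> trep_tcls(2)[OF u]])
  then show ?thesis
    unfolding tensor_lift_def using trep_tcls(1)[OF u] u
    by (simp add: lin_ext_diff[OF bY] freeT_fin_supp)
qed

lemma tensor_lift_tensor_hom:
  assumes bY: "bimodule lY rY" and \<kappa>: "dual_hom lM rM lY rY \<kappa>"
  shows "tensor_hom lM rM lY rY (tensor_lift lY \<kappa>)"
proof -
  let ?G = "\<lambda>(m, f). \<kappa> f m"
  note lift = tensor_lift_tcls[OF bY \<kappa>]
  have "tensor_lift lY \<kappa> (tadd lM rM X Y) = tensor_lift lY \<kappa> X + tensor_lift lY \<kappa> Y"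
    if X: "X \<in> tensor lM rM" and Y: "Y \<in> tensor lM rM" for X Y
  proof -
    obtain u where "u \<in> freeT lM" "X = tcls lM rM u" using X by (rule tensorE)
    moreover obtain v where "v \<in> freeT lM" "Y = tcls lM rM v" using Y by (rule tensorE)
    ultimately show ?thesis by (simp add: tadd_tcls lift freeT_add lin_ext_add[OF bY] freeT_fin_supp)
  qed
  moreover have "tensor_lift lY \<kappa> (tlact lM rM b X) = lY b (tensor_lift lY \<kappa> X)"
    if X: "X \<in> tensor lM rM" for b X
  proof -
    obtain u where u: "u \<in> freeT lM" "X = tcls lM rM u" using X by (rule tensorE)
    have "lin_ext lY ?G (push (lact_pair lM b) u) = lin_ext lY (?G \<circ> lact_pair lM b) u"
      by (rule lin_ext_push[OF bY freeT_fin_supp[OF u(1)]])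
    also have "\<dots> = lin_ext lY (\<lambda>x. lY b (?G x)) u"
      by (rule lin_ext_cong) (auto simp: dual_homD[OF \<kappa>] dest: freeT_dual[OF u(1)])
    also have "\<dots> = lY b (lin_ext lY ?G u)" by (rule lin_ext_lact[OF bY])
    finally show ?thesis using u by (simp add: tlact_tcls lift freeT_push_lact)
  qed
  moreover have "tensor_lift lY \<kappa> (tract lM rM X b) = rY (tensor_lift lY \<kappa> X) b"
    if X: "X \<in> tensor lM rM" for b X
  proof -
    obtain u where u: "u \<in> freeT lM" "X = tcls lM rM u" using X by (rule tensorE)
    have "lin_ext lY ?G (push (ract_pair b) u) = lin_ext lY (?G \<circ> ract_pair b) u"
      by (rule lin_ext_push[OF bY freeT_fin_supp[OF u(1)]])
    also have "\<dots> = lin_ext lY (\<lambda>x. rY (?G x) b) u"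
      by (rule lin_ext_cong) (auto simp: dual_homD[OF \<kappa>] dest: freeT_dual[OF u(1)])
    also have "\<dots> = rY (lin_ext lY ?G u) b" by (rule lin_ext_ract[OF bY])
    finally show ?thesis using u by (simp add: tract_tcls lift freeT_push_ract)
  qed
  ultimately show ?thesis unfolding bihom_def by blast
qed

lemma additive_tensor_map_tcls:
  assumes bZ: "bimodule lZ rZ"
    and additive: "\<And>X Y. X \<in> tensor lM rM \<Longrightarrow> Y \<in> tensor lM rM \<Longrightarrow> \<Phi> (tadd lM rM X Y) = \<Phi> X + \<Phi> Y"
    and u: "u \<in> freeT lM"
  shows "\<Phi> (tcls lM rM u) = lin_ext lZ (\<lambda>x. \<Phi> (tcls lM rM (delta x))) u"
proof -
  let ?F = "\<lambda>v. \<Phi> (tcls lM rM v) - lin_ext lZ (\<lambda>x. \<Phi> (tcls lM rM (delta x))) v"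
  have "?F u = 0"
  proof (rule gen_subgroup_additive_vanish[where F = ?F])
    show "u \<in> gen_subgroup {delta x |x. snd x \<in> dual lM}"
      using u freeT_eq_gen_subgroup by blast
    show "?F (v + w) = ?F v + ?F w"
      if "v \<in> gen_subgroup {delta x |x. snd x \<in> dual lM}" "w \<in> gen_subgroup {delta x |x. snd x \<in> dual lM}"
      for v w
    proof -
      have "v \<in> freeT lM" "w \<in> freeT lM" using that freeT_eq_gen_subgroup by blast+
      then show ?thesis
        by (simp add: tadd_tcls[symmetric] additive tcls_in_tensor lin_ext_add[OF bZ] freeT_fin_supp)
    qed
    show "?F g = 0" if "g \<in> {delta x |x. snd x \<in> dual lM}" for g
      using that by (auto simp: lin_ext_delta[OF bZ])
  qed
  then show ?thesis by simp
qed

lemma tensor_hom_adjunct: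
  assumes \<Phi>: "tensor_hom lM rM lZ rZ \<Phi>"
  shows "dual_hom lM rM lZ rZ (\<lambda>f m. \<Phi> (tcls lM rM (delta (m, f))))"
proof -
  let ?\<chi> = "\<lambda>f m. \<Phi> (tcls lM rM (delta (m, f)))"
  have in_tensor: "tcls lM rM (delta (m, f)) \<in> tensor lM rM" if "f \<in> dual lM" for m f
    using that by (simp add: tcls_in_tensor freeT_delta)
  have \<Phi>_add: "\<Phi> (tadd lM rM X Y) = \<Phi> X + \<Phi> Y"
    if "X \<in> tensor lM rM" "Y \<in> tensor lM rM" for X Y
    using \<Phi> that unfolding bihom_def by blast
  have \<Phi>_lact: "\<Phi> (tlact lM rM b X) = lZ b (\<Phi> X)"
    and \<Phi>_ract: "\<Phi> (tract lM rM X b) = rZ (\<Phi> X) b" if "X \<in> tensor lM rM" for X b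
    using \<Phi> that unfolding bihom_def by blast+
  have "?\<chi> f \<in> lhom lM lZ" if f: "f \<in> dual lM" for f
    unfolding lhom_def using f
    by (simp add: in_tensor tcls_delta_add_left \<Phi>_add tlact_tcls_delta[symmetric] \<Phi>_lact)
  moreover have "?\<chi> (f + g) = ?\<chi> f + ?\<chi> g" if "f \<in> dual lM" "g \<in> dual lM" for f g
    using that by (simp add: fun_eq_iff in_tensor tcls_delta_add_right \<Phi>_add)
  moreover have "?\<chi> (hom_lact rM a f) = hom_lact rM a (?\<chi> f)" if "f \<in> dual lM" for a f
    using that by (simp add: fun_eq_iff hom_lact_def tcls_delta_balanced)
  moreover have "?\<chi> (hom_ract (*) f b) = hom_ract rZ (?\<chi> f) b" if "f \<in> dual lM" for b f
    using that
    by (simp add: fun_eq_iff in_tensor tract_tcls_delta[symmetric] \<Phi>_ract) (simp add: hom_ract_def)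
  ultimately show ?thesis unfolding bihom_def by blast
qed

lemma tensor_E_projective:
  fixes lY :: "'b \<Rightarrow> 'y::ab_group_add \<Rightarrow> 'y" and lZ :: "'b \<Rightarrow> 'z::ab_group_add \<Rightarrow> 'z"
  assumes bY: "bimodule lY rY" and bZ: "bimodule lZ rZ"
    and E: "E_class lM rM lY rY lZ rZ f" and \<Phi>: "tensor_hom lM rM lZ rZ \<Phi>"
  shows "\<exists>\<Psi>. tensor_hom lM rM lY rY \<Psi> \<and> (\<forall>X\<in>tensor lM rM. f (\<Psi> X) = \<Phi> X)"
proof -
  obtain g where g: "bihom (lhom lM lZ) (lhom lM lY) (+) (+) (hom_lact rM) (hom_lact rM)
      (hom_ract rZ) (hom_ract rY) g" and fg: "\<And>h. h \<in> lhom lM lZ \<Longrightarrow> f \<circ> g h = h"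
    using E unfolding E_class_def by blast
  have f_add: "f (y + y') = f y + f y'" and f_lact: "f (lY b y) = lZ b (f y)" for y y' b
    using E unfolding E_class_def bihom_def by blast+
  define \<chi> where "\<chi> = (\<lambda>fd m. \<Phi> (tcls lM rM (delta (m, fd))))"
  have \<chi>: "dual_hom lM rM lZ rZ \<chi>" unfolding \<chi>_def by (rule tensor_hom_adjunct[OF \<Phi>])
  have g\<chi>: "dual_hom lM rM lY rY (g \<circ> \<chi>)" by (rule bihom_comp[OF \<chi> g])
  have "f (tensor_lift lY (g \<circ> \<chi>) X) = \<Phi> X" if X: "X \<in> tensor lM rM" for X
  proof -
    obtain u where u: "u \<in> freeT lM" "X = tcls lM rM u" using X by (rule tensorE)
    have "f (tensor_lift lY (g \<circ> \<chi>) X) = lin_ext lZ (f \<circ> (\<lambda>(m, fd). (g \<circ> \<chi>) fd m)) u"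
      unfolding u(2) tensor_lift_tcls[OF bY g\<chi> u(1)] by (rule lin_ext_comp) (rule f_add, rule f_lact)
    also have "\<dots> = lin_ext lZ (\<lambda>x. \<Phi> (tcls lM rM (delta x))) u"
    proof (rule lin_ext_cong)
      fix x assume "u x \<noteq> 0"
      then have "\<chi> (snd x) \<in> lhom lM lZ" using \<chi> freeT_dual[OF u(1)] unfolding bihom_def by blast
      then show "(f \<circ> (\<lambda>(m, fd). (g \<circ> \<chi>) fd m)) x = \<Phi> (tcls lM rM (delta x))"
        using fg unfolding \<chi>_def by (simp add: case_prod_beta fun_eq_iff)
    qed
    also have "\<dots> = \<Phi> X"
      using additive_tensor_map_tcls[OF bZ _ u(1), of \<Phi>] \<Phi> u(2) unfolding bihom_def by simp
    finally show ?thesis .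
  qed
  then show ?thesis using tensor_lift_tensor_hom[OF bY g\<chi>] by blast
qed

lemma dual_hom_id: "dual_hom lM rM (*) (*) (\<lambda>f. f)"
  unfolding bihom_def dual_def by simp

lemma ev_tcls: "u \<in> freeT lM \<Longrightarrow> ev (tcls lM rM u) = lin_ext (*) (\<lambda>(m, f). f m) u"
  unfolding ev_eq_tensor_lift by (rule tensor_lift_tcls[OF bimodule_ring dual_hom_id])

lemma ev_tensor_hom: "tensor_hom lM rM (*) (*) ev"
  unfolding ev_eq_tensor_lift by (rule tensor_lift_tensor_hom[OF bimodule_ring dual_hom_id])

subsection \<open>Separable and ev-injective bimodules\<close>

text \<open>Representatives in the free abelian group of a bimodule section of ev; being chosen
  representatives, they are additive and B-linear only modulo the relations.\<close>
definition ev_section_rep :: "('b \<Rightarrow> 'm \<times> ('m \<Rightarrow> 'b) \<Rightarrow> int) \<Rightarrow> bool" where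
  "ev_section_rep t \<longleftrightarrow>
     (\<forall>e. t e \<in> freeT lM \<and> ev (tcls lM rM (t e)) = e) \<and>
     (\<forall>e e'. t (e + e') - (t e + t e') \<in> rel_subgroup) \<and>
     (\<forall>b e. t (b * e) - push (lact_pair lM b) (t e) \<in> rel_subgroup) \<and>
     (\<forall>b e. t (e * b) - push (ract_pair b) (t e) \<in> rel_subgroup)"

lemma separable_ev_section_rep:
  assumes "separable_bimod lM rM"
  shows "\<exists>t. ev_section_rep t"
proof -
  obtain s where s: "bihom UNIV (tensor lM rM) (+) (tadd lM rM) (*) (tlact lM rM) (*) (tract lM rM) s"
    and ev_s: "\<And>e. ev (s e) = e"
    using assms unfolding separable_bimod_def by blast
  have s_tensor: "s e \<in> tensor lM rM" for e using s unfolding bihom_def by blast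
  have s_add: "s (e + e') = tadd lM rM (s e) (s e')" and s_lact: "s (b * e) = tlact lM rM b (s e)"
    and s_ract: "s (e * b) = tract lM rM (s e) b" for e e' b
    using s unfolding bihom_def by blast+
  define t where "t e = trep (s e)" for e
  have t_freeT: "t e \<in> freeT lM" and tcls_t: "tcls lM rM (t e) = s e" for e
    unfolding t_def using tensor_trep[OF s_tensor] by auto
  have "t (e + e') - (t e + t e') \<in> rel_subgroup" for e e'
    using tcls_eq_iff[OF t_freeT[of "e + e'"] freeT_add[OF t_freeT[of e] t_freeT[of e']]]
    by (simp add: tcls_t s_add tadd_tcls[OF t_freeT t_freeT, symmetric])
  moreover have "t (b * e) - push (lact_pair lM b) (t e) \<in> rel_subgroup" for b e
    using tcls_eq_iff[OF t_freeT[of "b * e"] freeT_push_lact[OF t_freeT[of e], of b]]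
    by (simp add: tcls_t s_lact tlact_tcls[OF t_freeT, symmetric])
  moreover have "t (e * b) - push (ract_pair b) (t e) \<in> rel_subgroup" for b e
    using tcls_eq_iff[OF t_freeT[of "e * b"] freeT_push_ract[OF t_freeT[of e], of b]]
    by (simp add: tcls_t s_ract tract_tcls[OF t_freeT, symmetric])
  ultimately show ?thesis
    unfolding ev_section_rep_def using t_freeT tcls_t ev_s by (intro exI[of _ t]) simp
qed

context
  fixes t :: "'b \<Rightarrow> 'm \<times> ('m \<Rightarrow> 'b) \<Rightarrow> int"
  assumes t: "ev_section_rep t"
begin

definition ker_proj :: "('m \<times> ('m \<Rightarrow> 'b) \<Rightarrow> int) \<Rightarrow> 'm \<times> ('m \<Rightarrow> 'b) \<Rightarrow> int" where
  "ker_proj u = u - t (ev (tcls lM rM u))"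

definition ker_retract :: "('m \<times> ('m \<Rightarrow> 'b) \<Rightarrow> int) set \<Rightarrow> ('m \<times> ('m \<Rightarrow> 'b) \<Rightarrow> int) set" where
  "ker_retract X = tcls lM rM (ker_proj (trep X))"

lemma ev_section_rep_freeT: "t e \<in> freeT lM"
  and ev_section_rep_ev: "ev (tcls lM rM (t e)) = e"
  and ev_section_rep_add: "t (e + e') - (t e + t e') \<in> rel_subgroup"
  and ev_section_rep_lact: "t (b * e) - push (lact_pair lM b) (t e) \<in> rel_subgroup"
  and ev_section_rep_ract: "t (e * b) - push (ract_pair b) (t e) \<in> rel_subgroup"
  using t unfolding ev_section_rep_def by blast+

lemma ker_proj_freeT: "u \<in> freeT lM \<Longrightarrow> ker_proj u \<in> freeT lM"
  unfolding ker_proj_def by (simp add: freeT_diff ev_section_rep_freeT)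

lemma ev_tcls_ker_proj: "u \<in> freeT lM \<Longrightarrow> ev (tcls lM rM (ker_proj u)) = 0"
  unfolding ker_proj_def using ev_section_rep_freeT ev_section_rep_ev
  by (simp add: ev_tcls freeT_diff lin_ext_diff[OF bimodule_ring] freeT_fin_supp)

lemma ker_proj_on_ker: "ev (tcls lM rM u) = 0 \<Longrightarrow> ker_proj u - u \<in> rel_subgroup"
proof -
  have "t 0 \<in> rel_subgroup" using gen_subgroup.neg[OF ev_section_rep_add[of 0 0]] by simp
  then show "ev (tcls lM rM u) = 0 \<Longrightarrow> ker_proj u - u \<in> rel_subgroup"
    unfolding ker_proj_def using gen_subgroup.neg[of "t 0"] by simp
qed

lemma ker_proj_cong:
  "u \<in> freeT lM \<Longrightarrow> v \<in> freeT lM \<Longrightarrow> u - v \<in> rel_subgroup \<Longrightarrow> ker_proj u - ker_proj v \<in> rel_subgroup"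
  unfolding ker_proj_def by (simp add: tcls_eq_iff[symmetric])

lemma ker_proj_add:
  assumes "u \<in> freeT lM" and "v \<in> freeT lM"
  shows "ker_proj (u + v) - (ker_proj u + ker_proj v) \<in> rel_subgroup"
proof -
  have "ev (tcls lM rM (u + v)) = ev (tcls lM rM u) + ev (tcls lM rM v)"
    using ev_tensor_hom assms unfolding bihom_def by (simp add: tcls_in_tensor tadd_tcls[symmetric])
  then show ?thesis
    unfolding ker_proj_def using gen_subgroup.neg[OF ev_section_rep_add] by (simp add: algebra_simps)
qed

lemma ker_proj_lact:
  assumes "u \<in> freeT lM"
  shows "ker_proj (push (lact_pair lM b) u) - push (lact_pair lM b) (ker_proj u) \<in> rel_subgroup"
proof -
  have "ev (tcls lM rM (push (lact_pair lM b) u)) = b * ev (tcls lM rM u)"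
    using ev_tensor_hom assms unfolding bihom_def by (simp add: tcls_in_tensor tlact_tcls[symmetric])
  then show ?thesis
    unfolding ker_proj_def using gen_subgroup.neg[OF ev_section_rep_lact] assms
    by (simp add: push_diff freeT_fin_supp ev_section_rep_freeT algebra_simps)
qed

lemma ker_proj_ract:
  assumes "u \<in> freeT lM"
  shows "ker_proj (push (ract_pair b) u) - push (ract_pair b) (ker_proj u) \<in> rel_subgroup"
proof -
  have "ev (tcls lM rM (push (ract_pair b) u)) = ev (tcls lM rM u) * b"
    using ev_tensor_hom assms unfolding bihom_def by (simp add: tcls_in_tensor tract_tcls[symmetric])
  then show ?thesis
    unfolding ker_proj_def using gen_subgroup.neg[OF ev_section_rep_ract] assms
    by (simp add: push_diff freeT_fin_supp ev_section_rep_freeT algebra_simps)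
qed

lemma ker_retract_tcls:
  assumes "w \<in> freeT lM" and "w' \<in> freeT lM" and "ker_proj w - w' \<in> rel_subgroup"
  shows "ker_retract (tcls lM rM w) = tcls lM rM w'"
proof -
  have "ker_proj (trep (tcls lM rM w)) - ker_proj w \<in> rel_subgroup"
    using assms by (intro ker_proj_cong trep_tcls)
  then show ?thesis
    unfolding ker_retract_def using assms trep_tcls(1)[of w]
    by (subst tcls_eq_iff) (auto intro: ker_proj_freeT gen_subgroup_diff_trans)
qed

lemma ker_retract_id: "X \<in> ker_ev lM rM \<Longrightarrow> ker_retract X = X"
  unfolding ker_ev_def ker_retract_def
  using tcls_eq_iff[OF ker_proj_freeT tensor_trep(1)] ker_proj_on_ker tensor_trep by force

lemma ker_retract_bihom:
  "bihom (tensor lM rM) (ker_ev lM rM) (tadd lM rM) (tadd lM rM)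
     (tlact lM rM) (tlact lM rM) (tract lM rM) (tract lM rM) ker_retract"
proof -
  have "ker_retract X \<in> ker_ev lM rM" if "X \<in> tensor lM rM" for X
    using tensor_trep(1)[OF that] unfolding ker_ev_def ker_retract_def
    by (simp add: tcls_in_tensor ker_proj_freeT ev_tcls_ker_proj)
  moreover have "ker_retract (tadd lM rM X Y) = tadd lM rM (ker_retract X) (ker_retract Y)"
    if "X \<in> tensor lM rM" "Y \<in> tensor lM rM" for X Y
    using tensor_trep(1)[OF that(1)] tensor_trep(1)[OF that(2)]
    by (simp add: tadd_def[of _ _ X Y] ker_retract_def[of X] ker_retract_def[of Y] tadd_tcls
        ker_retract_tcls ker_proj_add freeT_add ker_proj_freeT)
  moreover have "ker_retract (tlact lM rM b X) = tlact lM rM b (ker_retract X)"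
    if "X \<in> tensor lM rM" for b X
    using tensor_trep(1)[OF that]
    by (simp add: tlact_def[of _ _ b X] ker_retract_def[of X] tlact_tcls ker_retract_tcls
        ker_proj_lact freeT_push_lact ker_proj_freeT)
  moreover have "ker_retract (tract lM rM X b) = tract lM rM (ker_retract X) b"
    if "X \<in> tensor lM rM" for b X
    using tensor_trep(1)[OF that]
    by (simp add: tract_def[of _ _ X b] ker_retract_def[of X] tract_tcls ker_retract_tcls
        ker_proj_ract freeT_push_ract ker_proj_freeT)
  ultimately show ?thesis unfolding bihom_def by blast
qed

end

lemma ker_ev_lift_if_separable:
  fixes lY :: "'b \<Rightarrow> 'y::ab_group_add \<Rightarrow> 'y" and lZ :: "'b \<Rightarrow> 'z::ab_group_add \<Rightarrow> 'z"
  assumes sep: "separable_bimod lM rM" and bY: "bimodule lY rY" and bZ: "bimodule lZ rZ"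
    and E: "E_class lM rM lY rY lZ rZ f"
    and \<phi>: "bihom (ker_ev lM rM) UNIV (tadd lM rM) (+) (tlact lM rM) lZ (tract lM rM) rZ \<phi>"
  shows "\<exists>\<psi>. bihom (ker_ev lM rM) UNIV (tadd lM rM) (+) (tlact lM rM) lY (tract lM rM) rY \<psi>
           \<and> (\<forall>X\<in>ker_ev lM rM. f (\<psi> X) = \<phi> X)"
proof -
  obtain t where t: "ev_section_rep t" using separable_ev_section_rep[OF sep] by blast
  let ?\<pi> = "ker_retract t"
  obtain \<Psi> where \<Psi>: "tensor_hom lM rM lY rY \<Psi>" and f\<Psi>: "\<forall>X\<in>tensor lM rM. f (\<Psi> X) = (\<phi> \<circ> ?\<pi>) X"
    using tensor_E_projective[OF bY bZ E bihom_comp[OF ker_retract_bihom[OF t] \<phi>]] by blast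
  have ker_tensor: "ker_ev lM rM \<subseteq> tensor lM rM" unfolding ker_ev_def by blast
  show ?thesis
  proof (intro exI conjI ballI)
    show "bihom (ker_ev lM rM) UNIV (tadd lM rM) (+) (tlact lM rM) lY (tract lM rM) rY \<Psi>"
      by (rule bihom_subset[OF \<Psi> ker_tensor])
    show "f (\<Psi> X) = \<phi> X" if "X \<in> ker_ev lM rM" for X
      using f\<Psi> ker_retract_id[OF t] ker_tensor that by auto
  qed
qed

lemma ker_ev_lift_if_inj_ev:
  assumes inj: "inj_on ev (tensor lM rM)" and bY: "bimodule lY rY"
    and E: "E_class lM rM lY rY lZ rZ f"
    and \<phi>: "bihom (ker_ev lM rM) UNIV (tadd lM rM) (+) (tlact lM rM) lZ (tract lM rM) rZ \<phi>"
  shows "\<exists>\<psi>. bihom (ker_ev lM rM) UNIV (tadd lM rM) (+) (tlact lM rM) lY (tract lM rM) rY \<psi>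
           \<and> (\<forall>X\<in>ker_ev lM rM. f (\<psi> X) = \<phi> X)"
proof (intro exI conjI ballI)
  show "bihom (ker_ev lM rM) UNIV (tadd lM rM) (+) (tlact lM rM) lY (tract lM rM) rY (\<lambda>_. 0)"
    unfolding bihom_def by (simp add: bimodule_l_zero[OF bY] bimodule_r_zero[OF bY])
  fix X assume X: "X \<in> ker_ev lM rM"
  txt \<open>Ker ev is zero: X + X and X lie in the tensor product and have the same image under ev.\<close>
  then have X_tensor: "X \<in> tensor lM rM" and ev_X: "ev X = 0" unfolding ker_ev_def by auto
  obtain u where u: "u \<in> freeT lM" and X_u: "X = tcls lM rM u" using X_tensor by (rule tensorE)
  have "ev (tadd lM rM X X) = ev X"
    using ev_tensor_hom X_tensor ev_X unfolding bihom_def by simp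
  moreover have "tadd lM rM X X \<in> tensor lM rM"
    unfolding X_u tadd_tcls[OF u u] by (rule tcls_in_tensor[OF freeT_add[OF u u]])
  ultimately have "tadd lM rM X X = X" using X_tensor by (rule inj_onD[OF inj])
  moreover have "\<phi> (tadd lM rM X X) = \<phi> X + \<phi> X" using \<phi> X unfolding bihom_def by blast
  ultimately have "\<phi> X = 0" by simp
  moreover have "f (0 + 0) = f 0 + f 0" using E unfolding E_class_def bihom_def by blast
  ultimately show "f 0 = \<phi> X" by simp
qed

end

theorem mainTheorem6:
  fixes lM :: "'b::ring_1 \<Rightarrow> 'm::ab_group_add \<Rightarrow> 'm"
    and rM :: "'m \<Rightarrow> 'a::ring_1 \<Rightarrow> 'm"
  assumes "bimodule lM rM"
    and "separable_bimod lM rM \<or> inj_on ev (tensor lM rM)"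
  shows "formally_smooth lM rM TYPE('y::ab_group_add) TYPE('z::ab_group_add)"
  unfolding formally_smooth_def
  using assms(2) ker_ev_lift_if_separable[OF assms(1)] ker_ev_lift_if_inj_ev[OF assms(1)] by blast

end
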